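(* Let $\Omega\subset\mathbb{R}^3$ be the open octahedron with vertices $\pm e_1,\pm e_2,\pm e_3$ ($e_m$ the unit vectors), and let $\mathcal{T}$ be its partition into the eight congruent tetrahedra each of which is the convex hull of one 2-face of $\Omega$ and the origin. Define the piecewise constant function $\bar q_h(x)=\operatorname{sgn}(x_1)\operatorname{sgn}(x_2)\operatorname{sgn}(x_3)$ for $x=(x_1,x_2,x_3)\in\Omega$. Then $\bar q_h\in\mathcal{L}^0_0(\mathcal{T})\cap L^2_0(\Omega)$ and \[\langle\operatorname{div}v_h,\bar q_h\rangle=0\qquad\text{for all } v_h\in\mathcal{L}^1_2(\mathcal{T};\mathbb{R}^3)\cap W^{1,1}_0(\Omega;\mathbb{R}^3).\]
   Context: $\mathcal{L}^s_k(\mathcal{T})$ denotes the space of functions in $W^{s,1}(\Omega)$ that are piecewise polynomials of degree at most $k$ on $\mathcal{T}$ (so $\mathcal{L}^0_0(\mathcal{T})$ are piecewise constants and $\mathcal{L}^1_2(\mathcal{T};\mathbb{R}^3)$ are continuous piecewise quadratic vector fields). $L^2_0(\Omega)$ is the space of $L^2$ functions with zero mean, and $\langle\cdot,\cdot\rangle$ the $L^2(\Omega)$ inner product. *)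

theory Defs
  imports "HOL-Analysis.Analysis"
begin

definition e :: "3 \<Rightarrow> real^3" where
  "e i = axis i 1"

definition octahedron :: "(real^3) set" where
  "octahedron = interior (convex hull {v. \<exists>i. v = e i \<or> v = - e i})"

text \<open>Sign vectors, indexing the eight 2-faces / tetrahedra.\<close>
definition sign_vectors :: "(real^3) set" where
  "sign_vectors = {s. \<forall>i. s $ i = 1 \<or> s $ i = -1}"

definition tetra :: "real^3 \<Rightarrow> (real^3) set" where
  "tetra s = convex hull {0, s $ 1 *\<^sub>R e 1, s $ 2 *\<^sub>R e 2, s $ 3 *\<^sub>R e 3}"

definition quad_poly :: "(real^3 \<Rightarrow> real) \<Rightarrow> bool" where
  "quad_poly p \<longleftrightarrow> (\<exists>c (b::real^3) (A::real^3^3). \<forall>x. p x = c + b \<bullet> x + x \<bullet> (A *v x))"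

definition L12 :: "(real^3 \<Rightarrow> real^3) \<Rightarrow> bool" where
  "L12 v \<longleftrightarrow> continuous_on (closure octahedron) v \<and>
     (\<forall>s\<in>sign_vectors. \<exists>P. (\<forall>i. quad_poly (\<lambda>x. P x $ i)) \<and> (\<forall>x\<in>tetra s. v x = P x))"

text \<open>Zero boundary trace (W^{1,1}_0 for continuous piecewise polynomials).\<close>
definition zero_trace :: "(real^3 \<Rightarrow> real^3) \<Rightarrow> bool" where
  "zero_trace v \<longleftrightarrow> (\<forall>x\<in>frontier octahedron. v x = 0)"

text \<open>Pointwise divergence (defined almost everywhere for piecewise polynomials).\<close>
definition div_at :: "(real^3 \<Rightarrow> real^3) \<Rightarrow> real^3 \<Rightarrow> real" where
  "div_at v x = (\<Sum>i\<in>UNIV. frechet_derivative v (at x) (axis i 1) $ i)"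

text \<open>L^0_0(T): piecewise constant (a.e., i.e. constant on the interior of each tetrahedron).\<close>
definition L00 :: "(real^3 \<Rightarrow> real) \<Rightarrow> bool" where
  "L00 q \<longleftrightarrow> (\<forall>s\<in>sign_vectors. \<exists>c. \<forall>x\<in>interior (tetra s). q x = c)"

definition L2_0 :: "(real^3 \<Rightarrow> real) \<Rightarrow> bool" where
  "L2_0 q \<longleftrightarrow> q \<in> borel_measurable (lebesgue_on octahedron) \<and>
     set_integrable lebesgue octahedron (\<lambda>x. (q x)\<^sup>2) \<and>
     set_integrable lebesgue octahedron q \<and>
     (LINT x:octahedron|lebesgue. q x) = 0"

definition qbar :: "real^3 \<Rightarrow> real" where
  "qbar x = sgn (x $ 1) * sgn (x $ 2) * sgn (x $ 3)"

end

theory Submission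
  imports Defs
begin

text \<open>
  On the tetrahedron \<open>T\<^sub>s = tetra s\<close> the field \<open>v\<close> is a quadratic polynomial, so \<open>div v\<close>
  is affine there and its integral over \<open>T\<^sub>s\<close> is \<open>|T\<^sub>s| = 1/6\<close> times its value at the
  centroid \<open>s/4\<close>. For a quadratic \<open>q\<close> the midpoint rule for differences is exact, which gives
  \<open>s\<^sub>j \<partial>\<^sub>j q(s/4) = q(m\<^sub>j\<^sub>k) + q(m\<^sub>j\<^sub>l) - q(m\<^sub>k) - q(m\<^sub>l)\<close>, where
  \<open>m\<^sub>k = s\<^sub>k e\<^sub>k / 2\<close> are the midpoints of the interior edges of \<open>T\<^sub>s\<close> and
  \<open>m\<^sub>j\<^sub>k = m\<^sub>j + m\<^sub>k\<close> those of its boundary edges. Since \<open>v\<close> vanishes on the boundary,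
  the integral of \<open>div v\<close> over \<open>T\<^sub>s\<close> is a combination of the values of \<open>v\<close> at the points
  \<open>m\<^sub>k\<close>. Weighted with \<open>qbar = s\<^sub>1 s\<^sub>2 s\<^sub>3\<close> and summed over the eight tetrahedra, each
  such term appears with opposite signs in two tetrahedra that differ only in a sign on which
  the term does not depend, so the sum vanishes.
\<close>

section \<open>Sign vectors\<close>

lemma sign_vectors_cases: "s \<in> sign_vectors \<Longrightarrow> s $ i = 1 \<or> s $ i = -1"
  by (simp add: sign_vectors_def)

lemma sign_vector_nth_mult_self: "s \<in> sign_vectors \<Longrightarrow> s $ i * s $ i = 1"
  using sign_vectors_cases[of s i] by auto

lemma sign_vector_mult_self: "s \<in> sign_vectors \<Longrightarrow> s * s * x = x"
  by (simp add: vec_eq_iff sign_vector_nth_mult_self)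

lemma one_in_sign_vectors: "1 \<in> sign_vectors"
  by (simp add: sign_vectors_def)

lemma sign_vectors_eq_image:
  "sign_vectors = (\<lambda>(a, b, c). vector [a, b, c]) ` ({-1,1} \<times> {-1,1} \<times> {-1,1})"
proof (intro equalityI subsetI)
  fix s assume s: "s \<in> sign_vectors"
  show "s \<in> (\<lambda>(a, b, c). vector [a, b, c]) ` ({-1,1} \<times> {-1,1} \<times> {-1,1})"
  proof (rule image_eqI)
    show "s = (\<lambda>(a, b, c). vector [a, b, c]) (s$1, s$2, s$3)"
      by (simp add: vec_eq_iff forall_3)
    show "(s$1, s$2, s$3) \<in> {-1,1} \<times> {-1,1} \<times> {-1,1}"
      using sign_vectors_cases[OF s, of 1] sign_vectors_cases[OF s, of 2] sign_vectors_cases[OF s, of 3]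
      by auto
  qed
next
  fix s :: "real^3"
  assume "s \<in> (\<lambda>(a, b, c). vector [a, b, c]) ` ({-1,1} \<times> {-1,1} \<times> {-1,1})"
  then show "s \<in> sign_vectors"
    by (elim imageE) (auto simp: sign_vectors_def forall_3)
qed

lemma finite_sign_vectors: "finite sign_vectors"
  by (simp add: sign_vectors_eq_image)

lemma sum_sign_vectors:
  "(\<Sum>s\<in>sign_vectors. g s) = (\<Sum>a\<in>{-1,1}. \<Sum>b\<in>{-1,1}. \<Sum>c\<in>{-1,1}. g (vector [a, b, c]))"
proof -
  have "inj (\<lambda>(a, b, c). vector [a, b, c] :: real^3)"
    by (auto simp: inj_def vec_eq_iff forall_3)
  then have "(\<Sum>s\<in>sign_vectors. g s) = sum (g \<circ> (\<lambda>(a, b, c). vector [a, b, c])) ({-1,1} \<times> {-1,1} \<times> {-1,1})"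
    unfolding sign_vectors_eq_image by (rule sum.reindex[OF inj_on_subset[OF _ subset_UNIV]])
  also have "\<dots> = (\<Sum>a\<in>{-1,1}. \<Sum>b\<in>{-1,1}. \<Sum>c\<in>{-1,1}. g (vector [a, b, c]))"
    by (simp only: sum.cartesian_product split_def o_def)
  finally show ?thesis .
qed

definition sign_vector_of :: "real^3 \<Rightarrow> real^3" where
  "sign_vector_of x = (\<chi> i. if x $ i < 0 then -1 else 1)"

lemma sign_vector_of_in_sign_vectors: "sign_vector_of x \<in> sign_vectors"
  by (simp add: sign_vector_of_def sign_vectors_def)

lemma sign_vector_of_nth_mult: "sign_vector_of x $ i * x $ i = \<bar>x $ i\<bar>"
  by (simp add: sign_vector_of_def)

lemma inner_sign_vector_le:
  assumes "s \<in> sign_vectors" shows "s \<bullet> x \<le> (\<Sum>i\<in>UNIV. \<bar>x $ i\<bar>)"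
  unfolding inner_vec_def inner_real_def
proof (rule sum_mono)
  fix i show "s $ i * x $ i \<le> \<bar>x $ i\<bar>"
    using sign_vectors_cases[OF assms, of i] by auto
qed

lemma inner_sign_vector_of: "sign_vector_of x \<bullet> x = (\<Sum>i\<in>UNIV. \<bar>x $ i\<bar>)"
  by (simp add: inner_vec_def sign_vector_of_nth_mult)

section \<open>The tetrahedra and the octahedron\<close>

lemma UNIV_3: "(UNIV :: 3 set) = {1, 2, 3}"
  using exhaust_3 by auto

lemma inner_e: "x \<bullet> e i = x $ i"
  by (simp add: e_def inner_axis)

lemma vec_eq_sum_e:
  assumes "j \<noteq> k" "j \<noteq> l" "k \<noteq> l"
  shows "x = x $ j *\<^sub>R e j + x $ k *\<^sub>R e k + x $ l *\<^sub>R e l"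
proof -
  have "i = j \<or> i = k \<or> i = l" for i :: 3
    using assms exhaust_3[of i] exhaust_3[of j] exhaust_3[of k] exhaust_3[of l] by fastforce
  then show ?thesis
    using assms by (auto simp: vec_eq_iff e_def axis_def)
qed

lemma Basis_cart: "(Basis :: (real^'n) set) = range (\<lambda>i. axis i 1)"
  by (auto simp: Basis_vec_def)

lemma sum_inner_Basis_cart: "sum (inner x) Basis = sum (($) x) UNIV" for x :: "real^'n"
  by (simp add: Basis_cart sum.reindex inj_on_def axis_eq_axis inner_axis)

lemma std_simplex_cart:
  "convex hull (insert 0 Basis) = {x::real^'n. (\<forall>i. 0 \<le> x $ i) \<and> sum (($) x) UNIV \<le> 1}"
  unfolding std_simplex sum_inner_Basis_cart by (auto simp: Basis_cart inner_axis)

lemma interior_std_simplex_cart: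
  "interior (convex hull (insert 0 Basis)) = {x::real^'n. (\<forall>i. 0 < x $ i) \<and> sum (($) x) UNIV < 1}"
  unfolding interior_std_simplex sum_inner_Basis_cart by (auto simp: Basis_cart inner_axis)

lemma linear_vector_mult: "linear ((*) (s::real^'n))"
  by (auto simp: linear_iff vec_eq_iff algebra_simps)

lemma mem_sign_reflection_image:
  assumes "s \<in> sign_vectors" shows "x \<in> (*) s ` A \<longleftrightarrow> s * x \<in> A"
proof
  assume "x \<in> (*) s ` A"
  then show "s * x \<in> A"
    by (auto simp: mult.assoc[symmetric] sign_vector_mult_self[OF assms])
next
  assume "s * x \<in> A"
  then show "x \<in> (*) s ` A"
    by (rule rev_image_eqI) (simp add: mult.assoc[symmetric] sign_vector_mult_self[OF assms])
qed

lemma tetra_eq_reflection_image: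
  assumes "s \<in> sign_vectors" shows "tetra s = (*) s ` (convex hull (insert 0 Basis))"
proof -
  have "s * axis i 1 = s $ i *\<^sub>R e i" for i
    by (simp add: e_def vec_eq_iff axis_def)
  then have "(*) s ` insert 0 Basis = {0, s$1 *\<^sub>R e 1, s$2 *\<^sub>R e 2, s$3 *\<^sub>R e 3}"
    by (simp add: Basis_cart image_image UNIV_3)
  then show ?thesis
    unfolding tetra_def by (simp add: convex_hull_linear_image[OF linear_vector_mult])
qed

lemma mem_tetra:
  assumes "s \<in> sign_vectors"
  shows "x \<in> tetra s \<longleftrightarrow> (\<forall>i. 0 \<le> s $ i * x $ i) \<and> s \<bullet> x \<le> 1"
  unfolding tetra_eq_reflection_image[OF assms] mem_sign_reflection_image[OF assms] std_simplex_cart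
  by (simp add: inner_vec_def)

lemma mem_interior_tetra:
  assumes "s \<in> sign_vectors"
  shows "x \<in> interior (tetra s) \<longleftrightarrow> (\<forall>i. 0 < s $ i * x $ i) \<and> s \<bullet> x < 1"
proof -
  have "inj ((*) s)"
    by (rule inj_on_inverseI[where g = "(*) s"]) (simp add: mult.assoc[symmetric] sign_vector_mult_self[OF assms])
  then show ?thesis
    unfolding tetra_eq_reflection_image[OF assms]
      interior_injective_linear_image[OF linear_vector_mult \<open>inj ((*) s)\<close>]
      mem_sign_reflection_image[OF assms]
      interior_std_simplex_cart
    by (simp add: inner_vec_def)
qed

lemma interior_tetra_eq_reflection_image:
  assumes "s \<in> sign_vectors" shows "interior (tetra s) = (*) s ` interior (tetra 1)"
  by (auto simp: mem_sign_reflection_image[OF assms] mem_interior_tetra[OF assms]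
      mem_interior_tetra[OF one_in_sign_vectors] inner_vec_def mult.assoc[symmetric]
      sign_vector_nth_mult_self[OF assms])

lemma mem_interior_tetra_one:
  "x \<in> interior (tetra 1) \<longleftrightarrow> (\<forall>i. 0 < x $ i) \<and> x $ 1 + x $ 2 + x $ 3 < 1"
  by (simp add: mem_interior_tetra[OF one_in_sign_vectors] inner_vec_def sum_3)

lemma vertex_in_tetra: "s \<in> sign_vectors \<Longrightarrow> s $ i *\<^sub>R e i \<in> tetra s"
  and zero_in_tetra: "0 \<in> tetra s"
  unfolding tetra_def using exhaust_3[of i] by (auto intro: hull_inc)

lemma midpoint_in_tetra:
  assumes "x \<in> tetra s" and "y \<in> tetra s" shows "midpoint x y \<in> tetra s"
proof -
  have "(1/2 :: real) *\<^sub>R x + (1/2 :: real) *\<^sub>R y \<in> tetra s"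
    using assms unfolding tetra_def by (intro convexD convex_convex_hull) auto
  then show ?thesis
    by (simp add: midpoint_def scaleR_add_right)
qed

lemma sum_abs_le_one_eq_INT: "{x. (\<Sum>i\<in>UNIV. \<bar>x $ i\<bar>) \<le> 1} = (\<Inter>s\<in>sign_vectors. {x. s \<bullet> x \<le> 1})"
proof (intro equalityI subsetI)
  fix x assume "x \<in> (\<Inter>s\<in>sign_vectors. {x. s \<bullet> x \<le> 1})"
  then have "sign_vector_of x \<bullet> x \<le> 1"
    using sign_vector_of_in_sign_vectors by blast
  then show "x \<in> {x. (\<Sum>i\<in>UNIV. \<bar>x $ i\<bar>) \<le> 1}"
    by (simp add: inner_sign_vector_of)
next
  fix x :: "real^3" assume x: "x \<in> {x. (\<Sum>i\<in>UNIV. \<bar>x $ i\<bar>) \<le> 1}"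
  show "x \<in> (\<Inter>s\<in>sign_vectors. {x. s \<bullet> x \<le> 1})"
    using inner_sign_vector_le[of _ x] x by fastforce
qed

lemma sum_abs_e: "(\<Sum>j\<in>UNIV. \<bar>e i $ j\<bar>) = 1"
proof -
  have "\<bar>e i $ j\<bar> = (if i = j then 1 else 0)" for j
    by (simp add: e_def axis_def)
  then show ?thesis by simp
qed

lemma convex_hull_octahedron_vertices:
  "convex hull {v. \<exists>i. v = e i \<or> v = - e i} = {x. (\<Sum>i\<in>UNIV. \<bar>x $ i\<bar>) \<le> 1}"
  (is "?H = ?C")
proof
  have "convex ?C"
    unfolding sum_abs_le_one_eq_INT by (simp add: convex_INT convex_halfspace_le)
  moreover have "{v. \<exists>i. v = e i \<or> v = - e i} \<subseteq> ?C"
    using sum_abs_e by auto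
  ultimately show "?H \<subseteq> ?C"
    by (rule hull_minimal[rotated])
next
  have "(1/2 :: real) *\<^sub>R e 1 + (1/2 :: real) *\<^sub>R (- e 1) \<in> ?H"
    by (rule convexD[OF convex_convex_hull]) (auto intro: hull_inc)
  then have "0 \<in> ?H"
    by simp
  have tetra_subset: "tetra s \<subseteq> ?H" if s: "s \<in> sign_vectors" for s
  proof -
    have "s $ i *\<^sub>R e i \<in> ?H" for i
      using sign_vectors_cases[OF s, of i] by (auto intro!: hull_inc)
    then show ?thesis
      unfolding tetra_def using \<open>0 \<in> ?H\<close> by (intro hull_minimal) (simp_all add: convex_convex_hull)
  qed
  show "?C \<subseteq> ?H"
  proof
    fix x assume "x \<in> ?C"
    then have "x \<in> tetra (sign_vector_of x)"
      by (simp add: mem_tetra sign_vector_of_in_sign_vectors sign_vector_of_nth_mult inner_sign_vector_of)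
    then show "x \<in> ?H"
      using tetra_subset[OF sign_vector_of_in_sign_vectors] by blast
  qed
qed

lemma octahedron_eq: "octahedron = {x. (\<Sum>i\<in>UNIV. \<bar>x $ i\<bar>) < 1}"
proof
  have "open {x::real^3. (\<Sum>i\<in>UNIV. \<bar>x $ i\<bar>) < 1}"
    by (rule open_Collect_less) (intro continuous_intros)+
  then show "{x. (\<Sum>i\<in>UNIV. \<bar>x $ i\<bar>) < 1} \<subseteq> octahedron"
    unfolding octahedron_def convex_hull_octahedron_vertices by (intro interior_maximal) auto
  show "octahedron \<subseteq> {x. (\<Sum>i\<in>UNIV. \<bar>x $ i\<bar>) < 1}"
  proof
    fix x assume x: "x \<in> octahedron"
    let ?s = "sign_vector_of x"
    have "octahedron \<subseteq> interior {y. ?s \<bullet> y \<le> 1}"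
      unfolding octahedron_def convex_hull_octahedron_vertices
      by (intro interior_mono) (auto intro: order_trans[OF inner_sign_vector_le] sign_vector_of_in_sign_vectors)
    also have "\<dots> = {y. ?s \<bullet> y < 1}"
      by (rule interior_halfspace_le) (auto simp: vec_eq_iff sign_vector_of_def)
    finally show "x \<in> {x. (\<Sum>i\<in>UNIV. \<bar>x $ i\<bar>) < 1}"
      using x by (auto simp: inner_sign_vector_of)
  qed
qed

lemma frontier_octahedron: "frontier octahedron = {x. (\<Sum>i\<in>UNIV. \<bar>x $ i\<bar>) = 1}"
proof -
  have "0 \<in> octahedron"
    by (simp add: octahedron_eq)
  then have "closure octahedron = closure {x. (\<Sum>i\<in>UNIV. \<bar>x $ i\<bar>) \<le> 1}"
    unfolding octahedron_def convex_hull_octahedron_vertices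
    by (intro convex_closure_interior) (auto simp flip: convex_hull_octahedron_vertices)
  also have "\<dots> = {x. (\<Sum>i\<in>UNIV. \<bar>x $ i\<bar>) \<le> 1}"
    by (intro closure_closed closed_Collect_le continuous_intros)
  finally have "closure octahedron = {x. (\<Sum>i\<in>UNIV. \<bar>x $ i\<bar>) \<le> 1}" .
  moreover have "interior octahedron = octahedron"
    by (simp add: octahedron_def)
  ultimately show ?thesis
    by (auto simp: frontier_def octahedron_eq)
qed

lemma frontier_octahedron_tetra:
  assumes s: "s \<in> sign_vectors" and x: "x \<in> tetra s" and "s \<bullet> x = 1"
  shows "x \<in> frontier octahedron"
proof -
  have "\<bar>x $ i\<bar> = s $ i * x $ i" for i
  proof -
    have "0 \<le> s $ i * x $ i"
      using x by (simp add: mem_tetra[OF s])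
    then show ?thesis
      using sign_vectors_cases[OF s, of i] by auto
  qed
  then show ?thesis
    using assms(3) by (simp add: frontier_octahedron inner_vec_def)
qed

lemma sign_vector_of_interior_tetra:
  assumes s: "s \<in> sign_vectors" and x: "x \<in> interior (tetra s)"
  shows "sign_vector_of x = s"
  unfolding vec_eq_iff
proof
  fix i
  have "0 < s $ i * x $ i"
    using x by (simp add: mem_interior_tetra[OF s])
  then show "sign_vector_of x $ i = s $ i"
    using sign_vectors_cases[OF s, of i] by (auto simp: sign_vector_of_def zero_less_mult_iff)
qed

lemma interior_tetra_subset_octahedron:
  assumes s: "s \<in> sign_vectors" shows "interior (tetra s) \<subseteq> octahedron"
proof
  fix x assume x: "x \<in> interior (tetra s)"
  then have "sign_vector_of x \<bullet> x < 1"
    using mem_interior_tetra[OF s] sign_vector_of_interior_tetra[OF s x] by simp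
  then show "x \<in> octahedron"
    by (simp add: octahedron_eq inner_sign_vector_of)
qed

lemma mem_interior_tetra_sign_vector_of:
  assumes "x \<in> octahedron" and "\<And>i. x $ i \<noteq> 0"
  shows "x \<in> interior (tetra (sign_vector_of x))"
  using assms
  by (simp add: mem_interior_tetra sign_vector_of_in_sign_vectors sign_vector_of_nth_mult
      inner_sign_vector_of octahedron_eq)

section \<open>Integrals over the tetrahedra\<close>

lemma lmeasurable_interior_tetra: "interior (tetra s) \<in> lmeasurable"
  unfolding tetra_def by (intro lmeasurable_interior compact_imp_bounded compact_convex_hull) simp

lemma absolutely_integrable_on_interior_tetra:
  fixes f :: "real^3 \<Rightarrow> 'b::euclidean_space"
  assumes "continuous_on UNIV f"
  shows "f absolutely_integrable_on interior (tetra s)"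
proof -
  have "bounded (interior (tetra s))"
    unfolding tetra_def by (intro bounded_interior compact_imp_bounded compact_convex_hull) simp
  then obtain a where a: "interior (tetra s) \<subseteq> cbox (-a) a"
    by (rule bounded_subset_cbox_symmetric)
  have "f absolutely_integrable_on cbox (-a) a"
    by (intro absolutely_integrable_continuous continuous_on_subset[OF assms]) simp
  then show ?thesis
    using a lmeasurable_interior_tetra by (auto intro: set_integrable_subset)
qed

lemma interior_tetra_disjoint:
  assumes "s \<in> sign_vectors" "s' \<in> sign_vectors" "s \<noteq> s'"
  shows "interior (tetra s) \<inter> interior (tetra s') = {}"
  using assms sign_vector_of_interior_tetra by blast

lemma negligible_octahedron_diff_interior_tetra:
  "negligible (octahedron - (\<Union>s\<in>sign_vectors. interior (tetra s)))"
proof -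
  have "octahedron - (\<Union>s\<in>sign_vectors. interior (tetra s)) \<subseteq> (\<Union>i. {x. x $ i = 0})"
  proof
    fix x assume x: "x \<in> octahedron - (\<Union>s\<in>sign_vectors. interior (tetra s))"
    show "x \<in> (\<Union>i. {x. x $ i = 0})"
    proof (rule ccontr)
      assume "x \<notin> (\<Union>i. {x. x $ i = 0})"
      then have "x \<in> interior (tetra (sign_vector_of x))"
        using x by (intro mem_interior_tetra_sign_vector_of) auto
      then show False
        using x sign_vector_of_in_sign_vectors by blast
    qed
  qed
  moreover have "negligible (\<Union>i. {x::real^3. x $ i = 0})"
    by (intro negligible_Union) (auto intro: negligible_standard_hyperplane_cart)
  ultimately show ?thesis
    using negligible_subset by blast
qed

lemma integral_octahedron_split:
  fixes f :: "real^3 \<Rightarrow> 'b::euclidean_space"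
  assumes f: "\<And>s. s \<in> sign_vectors \<Longrightarrow> f absolutely_integrable_on interior (tetra s)"
  shows "f absolutely_integrable_on octahedron"
    and "integral octahedron f = (\<Sum>s\<in>sign_vectors. integral (interior (tetra s)) f)"
proof -
  let ?U = "\<Union>s\<in>sign_vectors. interior (tetra s)"
  have "{x \<in> ?U - octahedron. f x \<noteq> 0} = {}"
    using interior_tetra_subset_octahedron by blast
  then have "negligible {x \<in> ?U - octahedron. f x \<noteq> 0}"
    by (simp only: empty_imp_negligible)
  moreover have "negligible {x \<in> octahedron - ?U. f x \<noteq> 0}"
    by (rule negligible_subset[OF negligible_octahedron_diff_interior_tetra]) blast
  ultimately have neg: "negligible {x \<in> ?U - octahedron. f x \<noteq> 0}" "negligible {x \<in> octahedron - ?U. f x \<noteq> 0}"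
    by blast+
  have "f absolutely_integrable_on ?U"
    using f lmeasurable_interior_tetra by (intro set_integrable_UN finite_sign_vectors) (auto intro: fmeasurableD)
  then show "f absolutely_integrable_on octahedron"
    using neg by (rule absolutely_integrable_spike_set)
  have "pairwise (\<lambda>s s'. negligible (interior (tetra s) \<inter> interior (tetra s'))) sign_vectors"
    by (rule pairwiseI) (simp add: interior_tetra_disjoint empty_imp_negligible)
  then have "(f has_integral (\<Sum>s\<in>sign_vectors. integral (interior (tetra s)) f)) ?U"
    using f set_lebesgue_integral_eq_integral(1)
    by (intro has_integral_UN[OF finite_sign_vectors]) (auto intro: integrable_integral)
  then show "integral octahedron f = (\<Sum>s\<in>sign_vectors. integral (interior (tetra s)) f)"
    using integral_spike_set[OF neg] by (simp add: integral_unique)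
qed

lemma integral_unimodular_affine_image:
  fixes f :: "real^'m::{finite,wellorder} \<Rightarrow> real^'n"
  assumes det: "\<bar>det M\<bar> = 1" and S: "S \<in> sets lebesgue"
    and f: "f absolutely_integrable_on (\<lambda>x. M *v x + c) ` S"
  shows "integral S (\<lambda>x. f (M *v x + c)) = integral ((\<lambda>x. M *v x + c) ` S) f"
proof -
  have "inj ((*v) M)"
    using det by (intro inj_matrix_vector_mult) (simp add: invertible_det_nz)
  then have inj: "inj_on (\<lambda>x. M *v x + c) S"
    by (simp add: inj_on_def inj_def)
  have "((\<lambda>x. M *v x + c) has_derivative (*v) M) (at x within S)" if "x \<in> S" for x
    by (intro has_derivative_add_const bounded_linear_imp_has_derivative matrix_vector_mul_bounded_linear)
  from has_absolute_integral_change_of_variables[OF S this inj, of f "integral ((\<lambda>x. M *v x + c) ` S) f"]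
  show ?thesis
    using f det by simp
qed

lemma image_involution:
  assumes "\<And>x. x \<in> S \<Longrightarrow> g x \<in> S" and "\<And>x. g (g x) = x"
  shows "g ` S = S"
proof (intro equalityI image_subsetI subsetI)
  fix x assume "x \<in> S"
  then show "x \<in> g ` S"
    using assms by (metis image_eqI)
qed (use assms in blast)

lemma integral_const_lmeasurable:
  fixes c :: "'b::euclidean_space"
  assumes "S \<in> lmeasurable" shows "integral S (\<lambda>x. c) = measure lebesgue S *\<^sub>R c"
  using integral_linear[OF integrable_on_const[OF assms, of "1::real"] bounded_linear_scaleR_left, of c]
  by (simp add: o_def lmeasure_integral[OF assms])

lemma integral_id_unimodular_affine_invariant:
  fixes S :: "(real^'n::{finite,wellorder}) set"
  assumes det: "\<bar>det M\<bar> = 1" and S: "S \<in> lmeasurable" and id: "(\<lambda>x. x) absolutely_integrable_on S"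
    and invariant: "(\<lambda>x. M *v x + c) ` S = S"
  shows "M *v integral S (\<lambda>x. x) + measure lebesgue S *\<^sub>R c = integral S (\<lambda>x. x)"
proof -
  have "integral S (\<lambda>x. M *v x + c) = integral S (\<lambda>x. x)"
    using integral_unimodular_affine_image[OF det fmeasurableD[OF S], where f = "\<lambda>x. x"] id invariant by simp
  moreover have "integral S (\<lambda>x. M *v x + c) = M *v integral S (\<lambda>x. x) + measure lebesgue S *\<^sub>R c"
  proof -
    have "(\<lambda>x. x) integrable_on S"
      using id set_lebesgue_integral_eq_integral(1) by blast
    from integrable_linear[OF this matrix_vector_mul_bounded_linear]
      integral_linear[OF this matrix_vector_mul_bounded_linear]
    have "(\<lambda>x. M *v x) integrable_on S" "integral S (\<lambda>x. M *v x) = M *v integral S (\<lambda>x. x)"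
      by (simp_all add: o_def)
    then show ?thesis
      by (simp add: integral_add integrable_on_const[OF S] integral_const_lmeasurable[OF S])
  qed
  ultimately show ?thesis
    by simp
qed

lemma abs_det_sign_reflection:
  assumes "s \<in> sign_vectors" shows "\<bar>det (matrix ((*) s))\<bar> = 1"
proof -
  have "matrix ((*) s) = (\<chi> i j. if i = j then s $ i else 0)"
    by (simp add: matrix_def vec_eq_iff axis_def)
  then have "\<bar>det (matrix ((*) s))\<bar> = (\<Prod>i\<in>UNIV. \<bar>s $ i\<bar>)"
    by (simp add: det_diagonal abs_prod)
  also have "\<dots> = 1"
    using sign_vectors_cases[OF assms] by (intro prod.neutral) (metis abs_neg_one abs_one)
  finally show ?thesis .
qed

lemma measure_interior_tetra:
  assumes "s \<in> sign_vectors" shows "measure lebesgue (interior (tetra s)) = 1 / 6"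
proof -
  have compact: "compact (tetra 1)" and convex: "convex (tetra 1)"
    unfolding tetra_def by (auto intro: compact_convex_hull)
  have "measure lebesgue (interior (tetra 1)) = measure lebesgue (tetra 1)"
    using compact convex by (intro measure_interior compact_imp_bounded negligible_convex_frontier)
  also have "\<dots> = measure lborel (convex hull (insert 0 Basis :: (real^3) set))"
    using compact tetra_eq_reflection_image[OF one_in_sign_vectors] by (simp add: borel_closed compact_imp_closed)
  also have "\<dots> = 1 / 6"
    by (simp add: content_std_simplex fact_numeral)
  finally show ?thesis
    unfolding interior_tetra_eq_reflection_image[OF assms]
    by (simp add: measure_linear_image linear_vector_mult lmeasurable_interior_tetra
        abs_det_sign_reflection[OF assms])
qed

lemma integral_id_interior_tetra_one_invariant:
  fixes M :: "real^3^3"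
  assumes "\<bar>det M\<bar> = 1" and "\<And>x. x \<in> interior (tetra 1) \<Longrightarrow> M *v x + c \<in> interior (tetra 1)"
    and "\<And>x. M *v (M *v x + c) + c = x"
  shows "M *v integral (interior (tetra 1)) (\<lambda>x. x) + (1 / 6) *\<^sub>R c = integral (interior (tetra 1)) (\<lambda>x. x)"
  using integral_id_unimodular_affine_invariant[OF assms(1) lmeasurable_interior_tetra
      absolutely_integrable_on_interior_tetra[OF continuous_on_id] image_involution[OF assms(2,3)]]
  unfolding measure_interior_tetra[OF one_in_sign_vectors] .

lemma integral_id_interior_tetra_one_coordinates:
  "integral (interior (tetra 1)) (\<lambda>x. x) $ 2 = integral (interior (tetra 1)) (\<lambda>x. x) $ 1"
  "integral (interior (tetra 1)) (\<lambda>x. x) $ 3 = integral (interior (tetra 1)) (\<lambda>x. x) $ 2"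
proof -
  let ?T = "interior (tetra 1)" and ?m = "integral (interior (tetra 1)) (\<lambda>x. x)"
  let ?P12 = "vector [vector [0,1,0], vector [1,0,0], vector [0,0,1]] :: real^3^3"
  let ?P23 = "vector [vector [1,0,0], vector [0,0,1], vector [0,1,0]] :: real^3^3"
  have P12: "?P12 *v x = vector [x$2, x$1, x$3]" and P23: "?P23 *v x = vector [x$1, x$3, x$2]" for x
    by (simp_all add: vec_eq_iff forall_3 matrix_vector_mult_def sum_3)
  have "?P12 *v ?m + (1 / 6) *\<^sub>R 0 = ?m"
  proof (rule integral_id_interior_tetra_one_invariant)
    show "\<bar>det ?P12\<bar> = 1"
      by (simp add: det_3)
    show "?P12 *v x + 0 \<in> ?T" if "x \<in> ?T" for x
      using that by (simp add: P12 mem_interior_tetra_one forall_3)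
    show "?P12 *v (?P12 *v x + 0) + 0 = x" for x
      by (simp add: P12 vec_eq_iff forall_3)
  qed
  from arg_cong[where f = "\<lambda>v. v $ 1", OF this] show "?m $ 2 = ?m $ 1"
    by (simp add: P12)
  have "?P23 *v ?m + (1 / 6) *\<^sub>R 0 = ?m"
  proof (rule integral_id_interior_tetra_one_invariant)
    show "\<bar>det ?P23\<bar> = 1"
      by (simp add: det_3)
    show "?P23 *v x + 0 \<in> ?T" if "x \<in> ?T" for x
      using that by (simp add: P23 mem_interior_tetra_one forall_3)
    show "?P23 *v (?P23 *v x + 0) + 0 = x" for x
      by (simp add: P23 vec_eq_iff forall_3)
  qed
  from arg_cong[where f = "\<lambda>v. v $ 2", OF this] show "?m $ 3 = ?m $ 2"
    by (simp add: P23)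
qed

text \<open>The affine map \<open>x \<mapsto> (1 - x\<^sub>1 - x\<^sub>2 - x\<^sub>3, x\<^sub>2, x\<^sub>3)\<close> exchanges the
  vertices \<open>0\<close> and \<open>e\<^sub>1\<close> of the standard simplex; with the equality of the coordinates of
  the moment, its invariance makes each coordinate a quarter of the volume.\<close>

lemma integral_id_interior_tetra_one: "integral (interior (tetra 1)) (\<lambda>x. x) = (1 / 24) *\<^sub>R 1"
proof -
  let ?T = "interior (tetra 1)" and ?m = "integral (interior (tetra 1)) (\<lambda>x. x)"
  let ?F = "vector [vector [-1,-1,-1], vector [0,1,0], vector [0,0,1]] :: real^3^3"
  have F: "?F *v x + axis 1 1 = vector [1 - x$1 - x$2 - x$3, x$2, x$3]" for x
    by (simp add: vec_eq_iff forall_3 matrix_vector_mult_def sum_3 axis_def)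
  have "?F *v ?m + (1 / 6) *\<^sub>R axis 1 1 = ?m"
  proof (rule integral_id_interior_tetra_one_invariant)
    show "\<bar>det ?F\<bar> = 1"
      by (simp add: det_3)
    show "?F *v x + axis 1 1 \<in> ?T" if "x \<in> ?T" for x
      using that by (simp add: F mem_interior_tetra_one forall_3)
    show "?F *v (?F *v x + axis 1 1) + axis 1 1 = x" for x
      by (simp add: F vec_eq_iff forall_3)
  qed
  from arg_cong[where f = "\<lambda>v. v $ 1", OF this] have "1 / 6 - ?m $ 1 - ?m $ 2 - ?m $ 3 = ?m $ 1"
    by (simp add: matrix_vector_mult_def sum_3 axis_def)
  with integral_id_interior_tetra_one_coordinates show ?thesis
    by (simp add: vec_eq_iff forall_3)
qed

lemma integral_id_interior_tetra:
  assumes s: "s \<in> sign_vectors"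
  shows "integral (interior (tetra s)) (\<lambda>x. x) = (1 / 24) *\<^sub>R s"
proof -
  let ?R = "matrix ((*) s)"
  have R: "?R *v x + 0 = s * x" for x
    by (simp add: matrix_works linear_vector_mult)
  have "integral (interior (tetra 1)) (\<lambda>x. ?R *v x + 0) = integral ((\<lambda>x. ?R *v x + 0) ` interior (tetra 1)) (\<lambda>x. x)"
    using absolutely_integrable_on_interior_tetra[OF continuous_on_id]
    by (intro integral_unimodular_affine_image abs_det_sign_reflection s fmeasurableD lmeasurable_interior_tetra)
      (simp add: R interior_tetra_eq_reflection_image[OF s, symmetric])
  also have "(\<lambda>x. ?R *v x + 0) ` interior (tetra 1) = interior (tetra s)"
    by (simp add: R interior_tetra_eq_reflection_image[OF s])
  finally have "integral (interior (tetra s)) (\<lambda>x. x) = integral (interior (tetra 1)) ((*) s)"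
    by (simp add: R)
  also have "\<dots> = s * integral (interior (tetra 1)) (\<lambda>x. x)"
  proof -
    have "(\<lambda>x. x) integrable_on interior (tetra 1)"
      using absolutely_integrable_on_interior_tetra[OF continuous_on_id] set_lebesgue_integral_eq_integral(1)
      by blast
    from integral_linear[OF this linear_conv_bounded_linear[THEN iffD1, OF linear_vector_mult]] show ?thesis
      by (simp add: o_def)
  qed
  finally show ?thesis
    by (simp add: integral_id_interior_tetra_one vec_eq_iff)
qed

lemma integral_interior_tetra_affine:
  assumes s: "s \<in> sign_vectors"
  shows "integral (interior (tetra s)) (\<lambda>x. a + \<beta> \<bullet> x) = (a + \<beta> \<bullet> ((1 / 4) *\<^sub>R s)) / 6"
proof -
  have integrable: "f integrable_on interior (tetra s)" if "continuous_on UNIV f" for f :: "real^3 \<Rightarrow> 'b::euclidean_space"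
    using absolutely_integrable_on_interior_tetra[OF that] set_lebesgue_integral_eq_integral(1) by blast
  have "integral (interior (tetra s)) (\<lambda>x. a + \<beta> \<bullet> x)
      = integral (interior (tetra s)) (\<lambda>x. a) + \<beta> \<bullet> integral (interior (tetra s)) (\<lambda>x. x)"
    using integral_linear[OF integrable[OF continuous_on_id] bounded_linear_inner_right, of \<beta>]
    by (simp add: integral_add integrable continuous_intros o_def)
  also have "\<dots> = (a + \<beta> \<bullet> ((1 / 4) *\<^sub>R s)) / 6"
    by (simp add: integral_const_lmeasurable lmeasurable_interior_tetra measure_interior_tetra[OF s]
        integral_id_interior_tetra[OF s] inner_scaleR_right field_simps)
  finally show ?thesis .
qed

lemma integral_interior_tetra_const:
  fixes f :: "real^3 \<Rightarrow> real"
  assumes s: "s \<in> sign_vectors" and f: "\<And>x. x \<in> interior (tetra s) \<Longrightarrow> f x = c"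
  shows "f absolutely_integrable_on interior (tetra s)" and "integral (interior (tetra s)) f = c / 6"
proof -
  have "f absolutely_integrable_on interior (tetra s) \<longleftrightarrow> (\<lambda>x. c) absolutely_integrable_on interior (tetra s)"
    by (rule set_integrable_cong) (simp_all add: f)
  then show "f absolutely_integrable_on interior (tetra s)"
    using absolutely_integrable_on_interior_tetra[OF continuous_on_const] by simp
  have "integral (interior (tetra s)) f = integral (interior (tetra s)) (\<lambda>x. c)"
    by (rule integral_cong) (simp add: f)
  then show "integral (interior (tetra s)) f = c / 6"
    by (simp add: integral_const_lmeasurable lmeasurable_interior_tetra measure_interior_tetra[OF s])
qed

section \<open>Quadratic polynomials and the divergence\<close>

definition quad_fun :: "real \<Rightarrow> real^'n \<Rightarrow> real^'n^'n \<Rightarrow> real^'n \<Rightarrow> real" where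
  "quad_fun c b A x = c + b \<bullet> x + x \<bullet> (A *v x)"

definition quad_grad :: "real^'n \<Rightarrow> real^'n^'n \<Rightarrow> real^'n \<Rightarrow> real^'n" where
  "quad_grad b A x = b + A *v x + x v* A"

lemma quad_poly_iff: "quad_poly p \<longleftrightarrow> (\<exists>c b A. p = quad_fun c b A)"
  by (simp add: quad_poly_def quad_fun_def fun_eq_iff)

lemma quad_poly_components:
  assumes "\<forall>j. quad_poly (\<lambda>x. P x $ j)"
  obtains c b A where "\<And>j. (\<lambda>x. P x $ j) = quad_fun (c j) (b j) (A j)"
proof -
  have "\<forall>j. \<exists>t. (\<lambda>x. P x $ j) = quad_fun (fst t) (fst (snd t)) (snd (snd t))"
  proof
    fix j
    obtain c b A where "(\<lambda>x. P x $ j) = quad_fun c b A"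
      using assms quad_poly_iff by blast
    then show "\<exists>t. (\<lambda>x. P x $ j) = quad_fun (fst t) (fst (snd t)) (snd (snd t))"
      by (intro exI[of _ "(c, b, A)"]) simp
  qed
  from choice[OF this] obtain T where "\<forall>j. (\<lambda>x. P x $ j) = quad_fun (fst (T j)) (fst (snd (T j))) (snd (snd (T j)))"
    by blast
  then show thesis
    by (intro that[of "\<lambda>j. fst (T j)" "\<lambda>j. fst (snd (T j))" "\<lambda>j. snd (snd (T j))"]) blast
qed

lemma has_derivative_quad_fun: "(quad_fun c b A has_derivative (\<lambda>h. quad_grad b A x \<bullet> h)) (at x)"
proof -
  have "((\<lambda>y. c + b \<bullet> y + y \<bullet> (A *v y)) has_derivative (\<lambda>h. 0 + b \<bullet> h + (x \<bullet> (A *v h) + h \<bullet> (A *v x)))) (at x)"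
    by (intro has_derivative_add has_derivative_const has_derivative_inner_right has_derivative_inner
        has_derivative_ident bounded_linear_imp_has_derivative matrix_vector_mul_bounded_linear)
  then show ?thesis
    unfolding quad_fun_def
    by (rule has_derivative_eq_rhs) (simp add: quad_grad_def fun_eq_iff inner_add_left dot_lmul_matrix inner_commute[of "A *v x"])
qed

lemma quad_fun_diff_pair:
  "quad_fun c b A (x + h) - quad_fun c b A x + (quad_fun c b A (y + h) - quad_fun c b A y)
    = 2 * (quad_grad b A ((1 / 2) *\<^sub>R (x + y + h)) \<bullet> h)"
  by (simp add: quad_fun_def quad_grad_def dot_lmul_matrix inner_add_left inner_add_right
      inner_commute[of "A *v _"] matrix_vector_right_distrib algebra_simps field_simps)

lemma sum_quad_grad_nth:
  "(\<Sum>j\<in>UNIV. quad_grad (b j) (A j) x $ j) = (\<Sum>j\<in>UNIV. b j $ j) + (\<Sum>j\<in>UNIV. A j $ j + column j (A j)) \<bullet> x"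
proof -
  have "(x v* A j) $ j = column j (A j) \<bullet> x" for j
    by (simp add: vector_matrix_mult_def column_def inner_vec_def mult.commute)
  then show ?thesis
    by (simp add: quad_grad_def matrix_vector_mul_component sum.distrib inner_sum_left inner_add_left)
qed

lemma div_at_eq_sum_quad_grad:
  assumes "open S" and "x \<in> S" and v: "\<And>y j. y \<in> S \<Longrightarrow> v y $ j = quad_fun (c j) (b j) (A j) y"
  shows "div_at v x = (\<Sum>j\<in>UNIV. quad_grad (b j) (A j) x $ j)"
proof -
  let ?Q = "\<lambda>y. \<chi> j. quad_fun (c j) (b j) (A j) y"
  let ?D = "\<lambda>h. \<chi> j. quad_grad (b j) (A j) x \<bullet> h"
  have component: "((\<lambda>y. ?Q y \<bullet> axis j 1) has_derivative (\<lambda>h. ?D h \<bullet> axis j 1)) (at x)" for j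
  proof -
    have "(\<lambda>y. ?Q y \<bullet> axis j 1) = quad_fun (c j) (b j) (A j)"
      and "(\<lambda>h. ?D h \<bullet> axis j 1) = (\<lambda>h. quad_grad (b j) (A j) x \<bullet> h)"
      by (simp_all add: inner_axis)
    then show ?thesis
      by (simp only: has_derivative_quad_fun)
  qed
  have "(?Q has_derivative ?D) (at x)"
  proof (subst has_derivative_componentwise_within, intro ballI)
    fix i :: "real^3" assume "i \<in> Basis"
    then obtain j where "i = axis j 1"
      by (auto simp: Basis_cart)
    then show "((\<lambda>y. ?Q y \<bullet> i) has_derivative (\<lambda>h. ?D h \<bullet> i)) (at x)"
      by (simp only: component)
  qed
  then have "(v has_derivative ?D) (at x)"
    by (rule has_derivative_transform_within_open[OF _ assms(1,2)]) (simp add: vec_eq_iff v)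
  then have "frechet_derivative v (at x) = ?D"
    by (rule frechet_derivative_at[symmetric])
  then show ?thesis
    unfolding div_at_def by (simp add: inner_axis)
qed

lemma quad_grad_centroid:
  assumes s: "s \<in> sign_vectors" and v: "zero_trace v"
    and q: "\<And>x. x \<in> tetra s \<Longrightarrow> v x $ j = quad_fun c b A x"
    and jkl: "j \<noteq> k" "j \<noteq> l" "k \<noteq> l"
  shows "quad_grad b A ((1 / 4) *\<^sub>R s) $ j
    = - s $ j * (v (midpoint 0 (s $ k *\<^sub>R e k)) $ j + v (midpoint 0 (s $ l *\<^sub>R e l)) $ j)"
proof -
  let ?v = "\<lambda>i. s $ i *\<^sub>R e i" and ?q = "quad_fun c b A"
  let ?m = "\<lambda>i. midpoint 0 (?v i)" and ?g = "quad_grad b A ((1 / 4) *\<^sub>R s)"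
  have edge_midpoint: "?q (?m i + ?m j) = 0" if "i \<noteq> j" for i
  proof -
    have mid: "midpoint (?v i) (?v j) \<in> tetra s"
      by (intro midpoint_in_tetra vertex_in_tetra s)
    have "s \<bullet> midpoint (?v i) (?v j) = 1"
      by (simp add: midpoint_def inner_add_right inner_e sign_vector_nth_mult_self[OF s])
    then have "v (midpoint (?v i) (?v j)) = 0"
      using v frontier_octahedron_tetra[OF s mid] by (simp add: zero_trace_def)
    moreover have "?m i + ?m j = midpoint (?v i) (?v j)"
      by (simp add: midpoint_def scaleR_add_right)
    ultimately show ?thesis
      using q[OF mid] by simp
  qed
  have interior_edge_midpoint: "?q (?m i) = v (?m i) $ j" for i
    by (intro q[symmetric] midpoint_in_tetra zero_in_tetra vertex_in_tetra s)
  have "(1 / 2) *\<^sub>R (?m k + ?m l + ?m j) = (1 / 4) *\<^sub>R s"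
    by (subst (4) vec_eq_sum_e[OF jkl]) (simp add: midpoint_def algebra_simps)
  moreover have "?g \<bullet> ?m j = s $ j / 2 * ?g $ j"
    by (simp add: midpoint_def inner_e)
  ultimately have "?q (?m k + ?m j) - ?q (?m k) + (?q (?m l + ?m j) - ?q (?m l)) = s $ j * ?g $ j"
    by (simp add: quad_fun_diff_pair)
  then have "- v (?m k) $ j - v (?m l) $ j = s $ j * ?g $ j"
    using jkl by (simp add: edge_midpoint interior_edge_midpoint)
  then show ?thesis
    using sign_vector_nth_mult_self[OF s, of j] by algebra
qed

text \<open>Minus the divergence of \<open>v\<close> at the centroid of \<open>tetra s\<close>, in terms of the values of
  \<open>v\<close> at the midpoints of the three interior edges \<open>[0, s\<^sub>k e\<^sub>k]\<close>.\<close>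

definition interior_edge_flux :: "(real^3 \<Rightarrow> real^3) \<Rightarrow> real^3 \<Rightarrow> real" where
  "interior_edge_flux v s =
    (let w = \<lambda>k j. v (midpoint 0 (s $ k *\<^sub>R e k)) $ j
     in s $ 1 * (w 2 1 + w 3 1) + s $ 2 * (w 1 2 + w 3 2) + s $ 3 * (w 1 3 + w 2 3))"

lemma integral_div_interior_tetra:
  assumes s: "s \<in> sign_vectors" and "L12 v" and v: "zero_trace v"
  shows "div_at v absolutely_integrable_on interior (tetra s)"
    and "integral (interior (tetra s)) (div_at v) = - interior_edge_flux v s / 6"
proof -
  obtain P where P: "\<forall>j. quad_poly (\<lambda>x. P x $ j)" and vP: "\<forall>x\<in>tetra s. v x = P x"
    using \<open>L12 v\<close> s by (auto simp: L12_def)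
  obtain c b A where P_eq: "\<And>j. (\<lambda>x. P x $ j) = quad_fun (c j) (b j) (A j)"
    using quad_poly_components[OF P] by blast
  have q: "v x $ j = quad_fun (c j) (b j) (A j) x" if "x \<in> tetra s" for x j
    using vP that fun_cong[OF P_eq[of j], of x] by simp
  define \<alpha> \<beta> where "\<alpha> = (\<Sum>j\<in>UNIV. b j $ j)" and "\<beta> = (\<Sum>j\<in>UNIV. A j $ j + column j (A j))"
  have div: "div_at v x = \<alpha> + \<beta> \<bullet> x" if "x \<in> interior (tetra s)" for x
  proof -
    have "div_at v x = (\<Sum>j\<in>UNIV. quad_grad (b j) (A j) x $ j)"
      by (rule div_at_eq_sum_quad_grad[OF open_interior that]) (rule q[OF subsetD[OF interior_subset]])
    then show ?thesis
      unfolding \<alpha>_def \<beta>_def sum_quad_grad_nth .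
  qed
  have "(\<lambda>x. \<alpha> + \<beta> \<bullet> x) absolutely_integrable_on interior (tetra s)"
    by (intro absolutely_integrable_on_interior_tetra continuous_intros)
  moreover have "div_at v absolutely_integrable_on interior (tetra s) \<longleftrightarrow>
      (\<lambda>x. \<alpha> + \<beta> \<bullet> x) absolutely_integrable_on interior (tetra s)"
    by (rule set_integrable_cong) (simp_all add: div)
  ultimately show "div_at v absolutely_integrable_on interior (tetra s)"
    by simp
  have "integral (interior (tetra s)) (div_at v) = (\<alpha> + \<beta> \<bullet> ((1 / 4) *\<^sub>R s)) / 6"
    using integral_cong[of "interior (tetra s)" "div_at v" "\<lambda>x. \<alpha> + \<beta> \<bullet> x"] div
      integral_interior_tetra_affine[OF s] by simp
  also have "\<alpha> + \<beta> \<bullet> ((1 / 4) *\<^sub>R s) = (\<Sum>j\<in>UNIV. quad_grad (b j) (A j) ((1 / 4) *\<^sub>R s) $ j)"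
    unfolding \<alpha>_def \<beta>_def sum_quad_grad_nth ..
  also have "\<dots> = - interior_edge_flux v s"
    using quad_grad_centroid[OF s v q, of 1 2 3] quad_grad_centroid[OF s v q, of 2 1 3]
      quad_grad_centroid[OF s v q, of 3 1 2]
    by (simp add: sum_3 interior_edge_flux_def)
  finally show "integral (interior (tetra s)) (div_at v) = - interior_edge_flux v s / 6"
    by simp
qed

section \<open>The piecewise constant function qbar\<close>

lemma qbar_interior_tetra:
  assumes s: "s \<in> sign_vectors" and x: "x \<in> interior (tetra s)"
  shows "qbar x = s $ 1 * s $ 2 * s $ 3"
proof -
  have "sgn (x $ i) = s $ i" for i
  proof -
    have "0 < s $ i * x $ i"
      using x by (simp add: mem_interior_tetra[OF s])
    then show ?thesis
      using sign_vectors_cases[OF s, of i] by (auto simp: zero_less_mult_iff)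
  qed
  then show ?thesis
    by (simp add: qbar_def)
qed

lemma L00_qbar: "L00 qbar"
  unfolding L00_def using qbar_interior_tetra by blast

lemma L2_0_qbar: "L2_0 qbar"
proof -
  have qbar: "qbar absolutely_integrable_on interior (tetra s)"
    "integral (interior (tetra s)) qbar = s $ 1 * s $ 2 * s $ 3 / 6" if "s \<in> sign_vectors" for s
    using integral_interior_tetra_const[OF that qbar_interior_tetra[OF that]] by simp_all
  have "(\<lambda>x. (qbar x)\<^sup>2) absolutely_integrable_on interior (tetra s)" if s: "s \<in> sign_vectors" for s
  proof (rule integral_interior_tetra_const(1)[OF s])
    fix x assume x: "x \<in> interior (tetra s)"
    have "(qbar x)\<^sup>2 = (s $ 1 * s $ 1) * (s $ 2 * s $ 2) * (s $ 3 * s $ 3)"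
      by (simp add: qbar_interior_tetra[OF s x] power2_eq_square ac_simps)
    then show "(qbar x)\<^sup>2 = 1"
      by (simp add: sign_vector_nth_mult_self[OF s])
  qed
  then have square: "(\<lambda>x. (qbar x)\<^sup>2) absolutely_integrable_on octahedron"
    by (rule integral_octahedron_split(1))
  have integrable: "qbar absolutely_integrable_on octahedron"
    using qbar(1) by (rule integral_octahedron_split(1))
  have "integral octahedron qbar = (\<Sum>s\<in>sign_vectors. s $ 1 * s $ 2 * s $ 3 / 6)"
    using integral_octahedron_split(2)[OF qbar(1)] qbar(2) by simp
  also have "\<dots> = 0"
    by (simp add: sum_sign_vectors)
  finally have "(LINT x:octahedron|lebesgue. qbar x) = 0"
    using integrable by (simp add: set_lebesgue_integral_eq_integral(2))
  moreover have "octahedron \<in> sets lebesgue"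
    by (simp add: octahedron_def)
  ultimately show ?thesis
    unfolding L2_0_def using square integrable absolutely_integrable_imp_borel_measurable by blast
qed

lemma integral_div_qbar_interior_tetra:
  assumes s: "s \<in> sign_vectors" and "L12 v" and "zero_trace v"
  shows "(\<lambda>x. div_at v x * qbar x) absolutely_integrable_on interior (tetra s)"
    and "integral (interior (tetra s)) (\<lambda>x. div_at v x * qbar x)
      = - (s $ 1 * s $ 2 * s $ 3 * interior_edge_flux v s) / 6"
proof -
  note div = integral_div_interior_tetra[OF assms]
  have "(\<lambda>x. div_at v x * qbar x) absolutely_integrable_on interior (tetra s) \<longleftrightarrow>
      (\<lambda>x. div_at v x * (s $ 1 * s $ 2 * s $ 3)) absolutely_integrable_on interior (tetra s)"
    by (rule set_integrable_cong) (simp_all add: qbar_interior_tetra[OF s])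
  then show "(\<lambda>x. div_at v x * qbar x) absolutely_integrable_on interior (tetra s)"
    using div(1) by (simp add: set_integrable_mult_left)
  have "integral (interior (tetra s)) (\<lambda>x. div_at v x * qbar x) =
      integral (interior (tetra s)) (div_at v) * (s $ 1 * s $ 2 * s $ 3)"
    by (subst integral_mult_left[symmetric], rule integral_cong) (simp add: qbar_interior_tetra[OF s])
  then show "integral (interior (tetra s)) (\<lambda>x. div_at v x * qbar x)
      = - (s $ 1 * s $ 2 * s $ 3 * interior_edge_flux v s) / 6"
    by (simp add: div(2))
qed

text \<open>Each summand depends on only two of the three signs and is odd in one of them.\<close>

lemma sum_sign_vectors_interior_edge_flux:
  "(\<Sum>s\<in>sign_vectors. s $ 1 * s $ 2 * s $ 3 * interior_edge_flux v s) = 0"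
  unfolding sum_sign_vectors interior_edge_flux_def Let_def by (simp add: algebra_simps)

lemma integral_div_qbar_eq_0:
  assumes "L12 v" and "zero_trace v"
  shows "(LINT x:octahedron|lebesgue. div_at v x * qbar x) = 0"
proof -
  note tetra = integral_div_qbar_interior_tetra[OF _ assms]
  have "integral octahedron (\<lambda>x. div_at v x * qbar x)
      = (\<Sum>s\<in>sign_vectors. integral (interior (tetra s)) (\<lambda>x. div_at v x * qbar x))"
    by (intro integral_octahedron_split(2) tetra(1))
  also have "\<dots> = (\<Sum>s\<in>sign_vectors. - (s $ 1 * s $ 2 * s $ 3 * interior_edge_flux v s) / 6)"
    by (intro sum.cong refl tetra(2))
  also have "\<dots> = - (\<Sum>s\<in>sign_vectors. s $ 1 * s $ 2 * s $ 3 * interior_edge_flux v s) / 6"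
    by (simp only: sum_negf[symmetric] sum_divide_distrib)
  also have "\<dots> = 0"
    by (simp add: sum_sign_vectors_interior_edge_flux)
  finally have "integral octahedron (\<lambda>x. div_at v x * qbar x) = 0" .
  moreover have "(\<lambda>x. div_at v x * qbar x) absolutely_integrable_on octahedron"
    by (intro integral_octahedron_split(1) tetra(1))
  ultimately show ?thesis
    by (simp add: set_lebesgue_integral_eq_integral(2))
qed

theorem proposition3p2:
  shows "L00 qbar \<and> L2_0 qbar \<and>
    (\<forall>v. L12 v \<and> zero_trace v \<longrightarrow>
        (LINT x:octahedron|lebesgue. div_at v x * qbar x) = 0)"
  using L00_qbar L2_0_qbar integral_div_qbar_eq_0 by blast

end
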